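(* Let $1<p\le\infty$ and let $f:\mathbb{T}^{\infty}\to\mathbb{R}$ be a measurable function that is Lipschitz with respect to the metric $\mathrm{dist}_p$. Then there exists $a\in\mathbb{R}$ with the following property: for every $\varepsilon>0$ there exists a parallel infinite-dimensional subtorus $M\subseteq\mathbb{T}^{\infty}$ such that $\|f-a\|_{L^{\infty}(M)}<\varepsilon$.
   Context: $\mathbb{T}=\mathbb{R}/\mathbb{Z}$ and $\mathbb{T}^{\infty}=\mathbb{T}^{\mathbb{N}}$ is the set of sequences $x=(x_i)_{i\ge1}$ with $x_i\in\mathbb{T}$. Let $\sigma$ be the uniform probability measure on $\mathbb{T}^{\infty}$ (the complete product of Haar probability measures on the circle); "measurable" refers to $\sigma$. For $x,y\in\mathbb{T}^\infty$, $\mathrm{dist}_p(x,y)=\left(\sum_{i\ge1}\mathrm{dist}^p(x_i,y_i)\right)^{1/p}$ and $\mathrm{dist}_\infty(x,y)=\sup_i \mathrm{dist}(x_i,y_i)$, where $\mathrm{dist}(x_i,y_i)$ is the distance in the circle $\mathbb{R}/\mathbb{Z}$; these may equal $+\infty$. A parallel infinite-dimensional subtorus is a set $M=\{x\in\mathbb{T}^\infty:\ x_i=b_i \text{ for all } i\in\mathbb{N}\setminus A\}$ for some infinite $A\subseteq\mathbb{N}$ and some $b:\mathbb{N}\setminus A\to\mathbb{T}$; $M$ carries its uniform (product) probability measure, with respect to which $L^\infty(M)$ is taken. *)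

theory Defs
  imports "HOL-Probability.Probability"
begin

text \<open>The circle T = R/Z is represented by the half-open interval [0,1) of reals
  with the uniform (Lebesgue) probability measure; T^infinity by sequences
  nat => real with values in [0,1), carrying the product measure sigma.\<close>

definition circle_measure :: "real measure" where
  "circle_measure = restrict_space lborel {0..<1}"

definition torus_measure :: "(nat \<Rightarrow> real) measure" where
  "torus_measure = PiM UNIV (\<lambda>_. circle_measure)"

definition circ_dist :: "real \<Rightarrow> real \<Rightarrow> real" where
  "circ_dist s t = \<bar>(s - t) - of_int (round (s - t))\<bar>"

definition torus_dist :: "ereal \<Rightarrow> (nat \<Rightarrow> real) \<Rightarrow> (nat \<Rightarrow> real) \<Rightarrow> ennreal" where
  "torus_dist p x y =
     (if p = \<infinity> then (SUP i. ennreal (circ_dist (x i) (y i)))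
      else (let q = real_of_ereal p in
            if summable (\<lambda>i. circ_dist (x i) (y i) powr q)
            then ennreal ((\<Sum>i. circ_dist (x i) (y i) powr q) powr (1 / q))
            else \<infinity>))"

definition torus_lipschitz :: "ereal \<Rightarrow> ((nat \<Rightarrow> real) \<Rightarrow> real) \<Rightarrow> bool" where
  "torus_lipschitz p f \<longleftrightarrow>
     (\<exists>L::real. L \<ge> 0 \<and> (\<forall>x\<in>space torus_measure. \<forall>y\<in>space torus_measure.
        ennreal \<bar>f x - f y\<bar> \<le> ennreal L * torus_dist p x y))"

text \<open>The parallel subtorus M = {x. x i = b i for i not in A} is parametrised by
  T^A (with its product measure) via the embedding below.\<close>
definition sub_embed :: "nat set \<Rightarrow> (nat \<Rightarrow> real) \<Rightarrow> (nat \<Rightarrow> real) \<Rightarrow> (nat \<Rightarrow> real)" where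
  "sub_embed A b y = (\<lambda>i. if i \<in> A then y i else b i)"

definition is_parallel_subtorus :: "nat set \<Rightarrow> (nat \<Rightarrow> real) \<Rightarrow> bool" where
  "is_parallel_subtorus A b \<longleftrightarrow> infinite A \<and> (\<forall>i. i \<notin> A \<longrightarrow> b i \<in> {0..<1})"

text \<open>L^infinity(M) norm (essential supremum w.r.t. the uniform measure of M),
  defined via almost-everywhere bounds so it makes sense for any function.\<close>
definition subtorus_Linf_norm :: "nat set \<Rightarrow> (nat \<Rightarrow> real) \<Rightarrow> ((nat \<Rightarrow> real) \<Rightarrow> real) \<Rightarrow> ennreal" where
  "subtorus_Linf_norm A b g =
     Inf {c::ennreal. AE y in PiM A (\<lambda>_. circle_measure). ennreal \<bar>g (sub_embed A b y)\<bar> \<le> c}"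

end

(*
  Replace f by a Borel function G agreeing with it almost everywhere, choose an essential
  value a of G, and clamp both to [a - 1, a + 1]; this keeps them bounded and changes nothing
  near a.  A bounded measurable function nearly depends on finitely many coordinates, so one
  can pick coordinates k_0 < k_1 < ... so sparse that resampling k_j on top of k_0, ..., k_(j-1)
  changes G by at least s_j only with tiny probability, and resampling all of them is close to
  resampling finitely many.  For a starting point x where all these sections are small, the
  Lipschitz bound upgrades "for most y" to "for every y": a jump of size s_j at one y would
  persist on a box around y whose measure exceeds the section.  Summing the s_j, the clamped
  f changes by at most eps/4 along every chain of resamplings, and the good x with G x close
  to a form a set of positive measure; the subtorus through such an x with free coordinates
  k_j works.
*)
theory Submission
  imports Defs
begin

lemma (in finite_measure) measure_sym_diff_triangle:
  assumes "A \<in> sets M" "B \<in> sets M" "C \<in> sets M"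
  shows "measure M (sym_diff A C)
    \<le> measure M (sym_diff A B) + measure M (sym_diff B C)"
proof -
  have "measure M (sym_diff A C) \<le> measure M (sym_diff A B \<union> sym_diff B C)"
    using assms by (intro finite_measure_mono) blast+
  also have "\<dots> \<le> measure M (sym_diff A B) + measure M (sym_diff B C)"
    using assms by (intro measure_subadditive) (auto simp: emeasure_eq_measure)
  finally show ?thesis .
qed

lemma (in finite_measure) measure_sym_diff_Un_le:
  assumes "A \<in> sets M" "B \<in> sets M"
    and "C \<in> sets M" "D \<in> sets M"
  shows "measure M (sym_diff (A \<union> B) (C \<union> D))
    \<le> measure M (sym_diff A C) + measure M (sym_diff B D)"
proof -
  have "measure M (sym_diff (A \<union> B) (C \<union> D))
      \<le> measure M (sym_diff A C \<union> sym_diff B D)"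
    using assms by (intro finite_measure_mono) blast+
  also have "\<dots> \<le> measure M (sym_diff A C) + measure M (sym_diff B D)"
    using assms by (intro measure_subadditive) (auto simp: emeasure_eq_measure)
  finally show ?thesis .
qed

lemma AE_ex_not_of_emeasure_small:
  fixes P :: "nat \<Rightarrow> 'a \<Rightarrow> bool"
  assumes sets: "\<And>J. {x\<in>space M. P J x} \<in> sets M"
    and small: "\<And>e::real. e > 0 \<Longrightarrow> \<exists>J. emeasure M {x\<in>space M. P J x} < ennreal e"
  shows "AE x in M. \<exists>J. \<not> P J x"
proof (rule AE_I')
  let ?N = "{x\<in>space M. \<forall>J. P J x}"
  have le: "emeasure M ?N \<le> ennreal e" if e: "e > 0" for e :: real
  proof -
    obtain J where J: "emeasure M {x\<in>space M. P J x} < ennreal e" using small[OF e] by blast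
    have "emeasure M ?N \<le> emeasure M {x\<in>space M. P J x}"
      using sets[of J] by (rule emeasure_mono[rotated]) blast
    with J show ?thesis by simp
  qed
  have "emeasure M ?N \<le> 0"
  proof (rule ennreal_le_epsilon)
    fix e :: real assume "0 < e"
    then show "emeasure M ?N \<le> 0 + ennreal e" using le by simp
  qed
  moreover have "?N \<in> sets M" using sets by (rule sets.sets_Collect_countable_All)
  ultimately show "?N \<in> null_sets M" by (simp add: null_sets_def)
qed blast

lemma ex_in_positive_set_of_AE:
  assumes "AE x in M. x \<in> X \<longrightarrow> P x" and "X \<in> sets M" and "0 < emeasure M X"
  shows "\<exists>x\<in>X. P x"
proof (rule ccontr)
  assume "\<not> ?thesis"
  with assms(1) have "AE x in M. x \<notin> X" by (auto elim: AE_mp)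
  with assms(2,3) show False by (simp add: AE_iff_null_sets[symmetric] null_sets_def)
qed

lemma (in prob_space) ex_essential_value:
  fixes g :: "'a \<Rightarrow> real"
  assumes g: "g \<in> borel_measurable M"
  shows "\<exists>a. \<forall>e>0. emeasure M {x\<in>space M. \<bar>g x - a\<bar> < e} > 0"
proof (rule ccontr)
  assume "\<not> ?thesis"
  then have null_ball: "\<forall>a. \<exists>e>0. emeasure M {x\<in>space M. \<bar>g x - a\<bar> < e} = 0"
    by (auto simp: not_less)
  \<comment> \<open>By Lindelof, countably many of these null balls already cover the real line.\<close>
  define \<F> where "\<F> = {ball a e | a e. e > 0 \<and> emeasure M {x\<in>space M. \<bar>g x - a\<bar> < e} = 0}"
  have "open S" if "S \<in> \<F>" for S using that unfolding \<F>_def by auto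
  then obtain \<F>' where F': "\<F>' \<subseteq> \<F>" "countable \<F>'" "\<Union>\<F>' = \<Union>\<F>"
    using Lindelof by metis
  have covered: "t \<in> \<Union>\<F>" for t
  proof -
    obtain e where "e > 0" "emeasure M {x\<in>space M. \<bar>g x - t\<bar> < e} = 0"
      using null_ball by blast
    then show ?thesis unfolding \<F>_def by (auto intro!: exI[of _ "ball t e"])
  qed
  have null: "g -` S \<inter> space M \<in> null_sets M" if S: "S \<in> \<F>'" for S
  proof -
    obtain a e where ball: "S = ball a e" and null: "emeasure M {x\<in>space M. \<bar>g x - a\<bar> < e} = 0"
      using F'(1) S unfolding \<F>_def by blast
    have "g -` S \<inter> space M = {x\<in>space M. \<bar>g x - a\<bar> < e}"
      using ball by (auto simp: dist_real_def abs_minus_commute)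
    then show ?thesis using null g by (auto simp: null_sets_def)
  qed
  have "(\<Union>S\<in>\<F>'. g -` S \<inter> space M) = space M"
  proof (intro equalityI subsetI)
    fix x assume "x \<in> space M"
    moreover obtain S where "S \<in> \<F>'" "g x \<in> S" using covered[of "g x"] F'(3) by blast
    ultimately show "x \<in> (\<Union>S\<in>\<F>'. g -` S \<inter> space M)" by blast
  qed blast
  moreover have "(\<Union>S\<in>\<F>'. g -` S \<inter> space M) \<in> null_sets M"
    using F'(2) null by (intro null_sets_UN') auto
  ultimately show False by (simp add: null_sets_def emeasure_space_1)
qed

lemma (in pair_prob_space) measure_large_sections_le:
  assumes B: "B \<in> sets (M1 \<Otimes>\<^sub>M M2)" and \<beta>: "0 < \<beta>" and \<delta>: "0 \<le> \<delta>"
    and small: "emeasure (M1 \<Otimes>\<^sub>M M2) B \<le> ennreal (\<beta> * \<delta>)"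
  shows "measure M1 {x\<in>space M1. ennreal \<beta> \<le> emeasure M2 (Pair x -` B)} \<le> \<delta>"
proof -
  let ?S = "{x\<in>space M1. ennreal \<beta> \<le> emeasure M2 (Pair x -` B)}"
  have [measurable]: "(\<lambda>x. emeasure M2 (Pair x -` B)) \<in> borel_measurable M1"
    using B by (rule measurable_emeasure_Pair1)
  have S: "?S \<in> sets M1" by measurable
  have "ennreal \<beta> * emeasure M1 ?S = (\<integral>\<^sup>+x. ennreal \<beta> * indicator ?S x \<partial>M1)"
    using S by (simp add: nn_integral_cmult_indicator)
  also have "\<dots> \<le> (\<integral>\<^sup>+x. emeasure M2 (Pair x -` B) \<partial>M1)"
    by (intro nn_integral_mono) (auto split: split_indicator)
  also have "\<dots> = emeasure (M1 \<Otimes>\<^sub>M M2) B"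
    using B by (rule M2.emeasure_pair_measure_alt[symmetric])
  finally have "ennreal (\<beta> * measure M1 ?S) \<le> ennreal (\<beta> * \<delta>)"
    using small \<beta> by (simp add: M1.emeasure_eq_measure ennreal_mult)
  then show ?thesis using \<beta> \<delta> by (simp add: ennreal_le_iff)
qed

lemma (in pair_prob_space) measure_some_large_section_le:
  assumes B: "\<And>j. B j \<in> sets (M1 \<Otimes>\<^sub>M M2)" and \<beta>: "\<And>j. 0 < \<beta> j" and \<delta>: "\<And>j. 0 \<le> \<delta> j"
    and "summable \<delta>" and small: "\<And>j. emeasure (M1 \<Otimes>\<^sub>M M2) (B j) \<le> ennreal (\<beta> j * \<delta> j)"
  shows "measure M1 {x\<in>space M1. \<exists>j. ennreal (\<beta> j) \<le> emeasure M2 (Pair x -` B j)} \<le> (\<Sum>j. \<delta> j)"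
proof -
  let ?S = "\<lambda>j. {x\<in>space M1. ennreal (\<beta> j) \<le> emeasure M2 (Pair x -` B j)}"
  have S: "?S j \<in> sets M1" for j
    using measurable_emeasure_Pair1[OF B] by measurable
  have le: "measure M1 (?S j) \<le> \<delta> j" for j
    using measure_large_sections_le[OF B \<beta> \<delta> small] .
  have summable: "summable (\<lambda>j. measure M1 (?S j))"
    using le by (intro summable_comparison_test[OF _ \<open>summable \<delta>\<close>]) auto
  have "{x\<in>space M1. \<exists>j. ennreal (\<beta> j) \<le> emeasure M2 (Pair x -` B j)} = (\<Union>j. ?S j)"
    by blast
  also have "measure M1 (\<Union>j. ?S j) \<le> (\<Sum>j. measure M1 (?S j))"
    using S summable by (intro M1.finite_measure_subadditive_countably) auto
  also have "\<dots> \<le> (\<Sum>j. \<delta> j)"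
    using le summable \<open>summable \<delta>\<close> by (rule suminf_le)
  finally show ?thesis .
qed

section \<open>The torus and its metrics\<close>

lemma prob_space_circle_measure: "prob_space circle_measure"
  unfolding circle_measure_def by (rule prob_space_restrict_space) auto

lemma space_circle_measure[simp]: "space circle_measure = {0..<1}"
  unfolding circle_measure_def by (simp add: space_restrict_space)

interpretation circle: product_prob_space "\<lambda>_::nat. circle_measure" UNIV
  by (simp add: product_prob_space_def product_sigma_finite_def product_prob_space_axioms_def
      prob_space_circle_measure prob_space_imp_sigma_finite)

lemma prob_space_torus_measure: "prob_space torus_measure"
  unfolding torus_measure_def by (rule prob_space_PiM) (rule prob_space_circle_measure)

interpretation torus: prob_space torus_measure
  by (rule prob_space_torus_measure)

interpretation torus_pair: pair_prob_space torus_measure torus_measure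
  by (simp add: pair_prob_space_def pair_sigma_finite_def prob_space_torus_measure
      prob_space_imp_sigma_finite)

lemma space_torus_measure: "space torus_measure = {x. \<forall>i. x i \<in> {0..<1}}"
  unfolding torus_measure_def by (auto simp: space_PiM PiE_def Pi_def)

lemma circ_dist_nonneg: "0 \<le> circ_dist s t"
  unfolding circ_dist_def by simp

lemma circ_dist_self[simp]: "circ_dist s s = 0"
  unfolding circ_dist_def by simp

lemma circ_dist_le_abs: "circ_dist s t \<le> \<bar>s - t\<bar>"
proof (cases "\<bar>s - t\<bar> < 1/2")
  case True
  then have "-(1/2) < s - t" "s - t < 1/2" by linarith+
  then have "round (s - t) = 0" unfolding round_def by (intro floor_unique) simp_all
  then show ?thesis unfolding circ_dist_def by simp
next
  case False
  have "\<bar>of_int (round (s - t)) - (s - t)\<bar> \<le> 1/2" by (rule of_int_round_abs_le)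
  then show ?thesis using False unfolding circ_dist_def by linarith
qed

lemma powr_sum_powr_le_sum:
  fixes d :: "'a \<Rightarrow> real"
  assumes Q: "finite Q" and d: "\<And>i. 0 \<le> d i" and q: "1 \<le> q"
  shows "(\<Sum>i\<in>Q. d i powr q) powr (1/q) \<le> (\<Sum>i\<in>Q. d i)"
proof -
  define D where "D = (\<Sum>i\<in>Q. d i)"
  have D0: "0 \<le> D" unfolding D_def using d by (simp add: sum_nonneg)
  have "d i powr q \<le> d i * D powr (q - 1)" if "i \<in> Q" for i
  proof -
    have "d i \<le> D" unfolding D_def using Q d that by (intro member_le_sum) auto
    moreover have "d i powr q = d i * d i powr (q - 1)"
      using d[of i] q by (cases "d i = 0") (auto simp: powr_mult_base)
    ultimately show ?thesis
      using d[of i] q by (cases "d i = 0") (auto intro!: mult_left_mono powr_mono2)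
  qed
  then have "(\<Sum>i\<in>Q. d i powr q) \<le> (\<Sum>i\<in>Q. d i * D powr (q - 1))"
    by (rule sum_mono)
  also have "\<dots> = D powr q"
    using D0 q unfolding D_def[symmetric] sum_distrib_right[symmetric]
    by (cases "D = 0") (auto simp: powr_mult_base)
  finally have "(\<Sum>i\<in>Q. d i powr q) powr (1/q) \<le> (D powr q) powr (1/q)"
    using q d by (intro powr_mono2) (auto intro: sum_nonneg)
  also have "\<dots> = D" using D0 q by (simp add: powr_powr)
  finally show ?thesis unfolding D_def .
qed

lemma torus_dist_le_sum_circ_dist:
  assumes p: "1 < p" and Q: "finite Q" and xy: "\<And>i. i \<notin> Q \<Longrightarrow> x i = y i"
  shows "torus_dist p x y \<le> ennreal (\<Sum>i\<in>Q. circ_dist (x i) (y i))"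
proof (cases "p = \<infinity>")
  case True
  have "ennreal (circ_dist (x i) (y i)) \<le> ennreal (\<Sum>i\<in>Q. circ_dist (x i) (y i))" for i
    using Q xy[of i] by (cases "i \<in> Q") (auto intro!: ennreal_leI member_le_sum simp: circ_dist_nonneg)
  then show ?thesis unfolding torus_dist_def using True by (simp add: SUP_le_iff)
next
  case False
  define q where "q = real_of_ereal p"
  have q: "1 < q" using p False unfolding q_def by (cases p) auto
  have zero: "circ_dist (x i) (y i) powr q = 0" if "i \<notin> Q" for i
    using xy[OF that] by simp
  then have "summable (\<lambda>i. circ_dist (x i) (y i) powr q)"
    using Q by (intro summable_finite) auto
  moreover have "(\<Sum>i. circ_dist (x i) (y i) powr q) = (\<Sum>i\<in>Q. circ_dist (x i) (y i) powr q)"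
    using Q zero by (intro suminf_finite) auto
  moreover have "(\<Sum>i\<in>Q. circ_dist (x i) (y i) powr q) powr (1/q) \<le> (\<Sum>i\<in>Q. circ_dist (x i) (y i))"
    using Q q by (intro powr_sum_powr_le_sum) (auto simp: circ_dist_nonneg)
  ultimately show ?thesis
    unfolding torus_dist_def using False q_def by (simp add: Let_def ennreal_leI)
qed

lemma torus_lipschitzE:
  assumes "1 < p" and "torus_lipschitz p f"
  obtains L where "0 \<le> L"
    and "\<And>x y Q. x \<in> space torus_measure \<Longrightarrow> y \<in> space torus_measure \<Longrightarrow> finite Q \<Longrightarrow>
      (\<And>i. i \<notin> Q \<Longrightarrow> x i = y i) \<Longrightarrow> \<bar>f x - f y\<bar> \<le> L * (\<Sum>i\<in>Q. circ_dist (x i) (y i))"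
proof -
  obtain L where L: "0 \<le> L" and lip: "\<forall>x\<in>space torus_measure. \<forall>y\<in>space torus_measure.
      ennreal \<bar>f x - f y\<bar> \<le> ennreal L * torus_dist p x y"
    using assms(2) unfolding torus_lipschitz_def by blast
  have "\<bar>f x - f y\<bar> \<le> L * (\<Sum>i\<in>Q. circ_dist (x i) (y i))"
    if "x \<in> space torus_measure" "y \<in> space torus_measure" "finite Q" "\<And>i. i \<notin> Q \<Longrightarrow> x i = y i"
    for x y Q
  proof -
    have "ennreal \<bar>f x - f y\<bar> \<le> ennreal L * torus_dist p x y" using lip that(1,2) by blast
    also have "\<dots> \<le> ennreal L * ennreal (\<Sum>i\<in>Q. circ_dist (x i) (y i))"
      by (intro mult_left_mono torus_dist_le_sum_circ_dist[OF assms(1) that(3,4)]) auto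
    also have "\<dots> = ennreal (L * (\<Sum>i\<in>Q. circ_dist (x i) (y i)))"
      using L by (simp add: ennreal_mult sum_nonneg circ_dist_nonneg)
    finally show ?thesis using L by (simp add: ennreal_le_iff sum_nonneg circ_dist_nonneg)
  qed
  with L that show ?thesis by blast
qed

lemma emeasure_circle_ball_ge:
  assumes c: "c \<in> {0..<1}" and r: "r > 0"
  shows "ennreal (min r (1/2)) \<le> emeasure circle_measure {t \<in> {0..<1}. circ_dist t c < r}"
proof -
  define m where "m = min r (1/2)"
  have m: "0 < m" "m \<le> r" "m \<le> 1/2" using r unfolding m_def by auto
  let ?B = "{t \<in> {0..<1}. circ_dist t c < r}"
  have B: "?B \<in> sets borel" unfolding circ_dist_def round_def by measurable
  have eq: "emeasure circle_measure ?B = emeasure lborel ?B"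
    unfolding circle_measure_def using B by (subst emeasure_restrict_space) auto
  \<comment> \<open>a half-open interval of length m on the side of c that stays inside [0,1)\<close>
  obtain I where "I \<subseteq> ?B" "emeasure lborel I = m"
  proof (cases "c + m \<le> 1")
    case True
    then have "{c..<c+m} \<subseteq> ?B" using c m by (auto intro: le_less_trans[OF circ_dist_le_abs])
    with that show ?thesis using m by simp
  next
    case False
    then have "{c-m<..c} \<subseteq> ?B" using c m by (auto intro: le_less_trans[OF circ_dist_le_abs])
    with that show ?thesis using m by simp
  qed
  then show ?thesis using eq B emeasure_mono[of I ?B lborel] unfolding m_def by simp
qed

lemma emeasure_torus_box_ge:
  assumes Q: "finite Q" and c: "c \<in> space torus_measure" and r: "r > 0"
  shows "ennreal (min r (1/2) ^ card Q)
    \<le> emeasure torus_measure {y \<in> space torus_measure. \<forall>i\<in>Q. circ_dist (y i) (c i) < r}"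
proof -
  let ?S = "\<lambda>i. {t \<in> {0..<1}. circ_dist t (c i) < r}"
  have S: "?S i \<in> sets circle_measure" for i
    unfolding circle_measure_def circ_dist_def round_def
    by (simp add: sets_restrict_space_iff) (measurable, auto)
  have eq: "{y \<in> space torus_measure. \<forall>i\<in>Q. circ_dist (y i) (c i) < r}
      = prod_emb UNIV (\<lambda>_. circle_measure) Q (Pi\<^sub>E Q ?S)"
    by (auto simp: prod_emb_def space_torus_measure PiE_iff torus_measure_def space_PiM)
  have "(\<Prod>i\<in>Q. ennreal (min r (1/2))) \<le> (\<Prod>i\<in>Q. emeasure circle_measure (?S i))"
    using c r by (intro prod_mono_ennreal emeasure_circle_ball_ge) (auto simp: space_torus_measure)
  also have "\<dots> = emeasure torus_measure (prod_emb UNIV (\<lambda>_. circle_measure) Q (Pi\<^sub>E Q ?S))"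
    unfolding torus_measure_def using Q S by (intro circle.emeasure_PiM_emb[symmetric]) auto
  finally show ?thesis using eq r by (simp add: prod_ennreal[symmetric] ennreal_power)
qed

section \<open>Sets determined by finitely many coordinates\<close>

definition depends_on_first :: "nat \<Rightarrow> (nat \<Rightarrow> real) set \<Rightarrow> bool" where
  "depends_on_first N C \<longleftrightarrow>
     (\<forall>x\<in>space torus_measure. \<forall>y\<in>space torus_measure. (\<forall>i<N. x i = y i) \<longrightarrow> (x \<in> C \<longleftrightarrow> y \<in> C))"

lemma depends_on_first_mono: "depends_on_first N C \<Longrightarrow> N \<le> N' \<Longrightarrow> depends_on_first N' C"
  unfolding depends_on_first_def by (meson order_less_le_trans)

lemma depends_on_first_Un:
  "depends_on_first N C \<Longrightarrow> depends_on_first N' C' \<Longrightarrow> depends_on_first (max N N') (C \<union> C')"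
  unfolding depends_on_first_def by (metis Un_iff max.strict_coboundedI1 max.strict_coboundedI2)

lemma depends_on_first_compl:
  "depends_on_first N C \<Longrightarrow> depends_on_first N (space torus_measure - C)"
  unfolding depends_on_first_def by blast

definition cylinder_approximable :: "(nat \<Rightarrow> real) set \<Rightarrow> bool" where
  "cylinder_approximable A \<longleftrightarrow> (\<forall>e>0. \<exists>N C. C \<in> sets torus_measure \<and> depends_on_first N C \<and>
      measure torus_measure (sym_diff A C) < e)"

lemma cylinder_approximable_cylinder:
  assumes "C \<in> sets torus_measure" "depends_on_first N C"
  shows "cylinder_approximable C"
  unfolding cylinder_approximable_def using assms by (auto intro!: exI[of _ N] exI[of _ C])

lemma cylinder_approximable_compl:
  assumes "A \<subseteq> space torus_measure" "cylinder_approximable A"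
  shows "cylinder_approximable (space torus_measure - A)"
  unfolding cylinder_approximable_def
proof (intro allI impI)
  fix e :: real assume "e > 0"
  then obtain N C where C: "C \<in> sets torus_measure" "depends_on_first N C"
    "measure torus_measure (sym_diff A C) < e"
    using assms(2) unfolding cylinder_approximable_def by blast
  have "sym_diff (space torus_measure - A) (space torus_measure - C) = sym_diff A C"
    using assms(1) sets.sets_into_space[OF C(1)] by blast
  then show "\<exists>N C. C \<in> sets torus_measure \<and> depends_on_first N C \<and>
      measure torus_measure (sym_diff (space torus_measure - A) C) < e"
    using C depends_on_first_compl by (intro exI[of _ N] exI[of _ "space torus_measure - C"]) auto
qed

lemma cylinder_approximable_Un:
  assumes "A \<in> sets torus_measure" "B \<in> sets torus_measure"
    and "cylinder_approximable A" "cylinder_approximable B"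
  shows "cylinder_approximable (A \<union> B)"
  unfolding cylinder_approximable_def
proof (intro allI impI)
  fix e :: real assume "e > 0"
  then obtain N C N' C' where C: "C \<in> sets torus_measure" "depends_on_first N C"
      "measure torus_measure (sym_diff A C) < e / 2"
    and C': "C' \<in> sets torus_measure" "depends_on_first N' C'"
      "measure torus_measure (sym_diff B C') < e / 2"
    using assms(3,4) unfolding cylinder_approximable_def by (meson half_gt_zero)
  have "measure torus_measure (sym_diff (A \<union> B) (C \<union> C')) < e"
    using torus.measure_sym_diff_Un_le[OF assms(1,2) C(1) C'(1)] C(3) C'(3) by linarith
  moreover have "C \<union> C' \<in> sets torus_measure" using C(1) C'(1) by (rule sets.Un)
  ultimately show "\<exists>N C. C \<in> sets torus_measure \<and> depends_on_first N C \<and>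
      measure torus_measure (sym_diff (A \<union> B) C) < e"
    using depends_on_first_Un[OF C(2) C'(2)] by blast
qed

lemma cylinder_approximable_limit:
  assumes A: "A \<in> sets torus_measure"
    and approx: "\<And>e. e > 0 \<Longrightarrow> \<exists>B \<in> sets torus_measure. cylinder_approximable B \<and>
      measure torus_measure (sym_diff A B) < e"
  shows "cylinder_approximable A"
  unfolding cylinder_approximable_def
proof (intro allI impI)
  fix e :: real assume "e > 0"
  then obtain B where B: "B \<in> sets torus_measure" "cylinder_approximable B"
    "measure torus_measure (sym_diff A B) < e / 2"
    using approx half_gt_zero by blast
  then obtain N C where C: "C \<in> sets torus_measure" "depends_on_first N C"
    "measure torus_measure (sym_diff B C) < e / 2"
    using \<open>e > 0\<close> unfolding cylinder_approximable_def by (meson half_gt_zero)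
  have "measure torus_measure (sym_diff A C) < e"
    using torus.measure_sym_diff_triangle[OF A B(1) C(1)] B(3) C(3) by linarith
  then show "\<exists>N C. C \<in> sets torus_measure \<and> depends_on_first N C \<and>
      measure torus_measure (sym_diff A C) < e"
    using C(1,2) by blast
qed

lemma cylinder_approximable_UN:
  fixes A :: "nat \<Rightarrow> (nat \<Rightarrow> real) set"
  assumes A: "\<And>i. A i \<in> sets torus_measure" "\<And>i. cylinder_approximable (A i)"
  shows "cylinder_approximable (\<Union>i. A i)"
proof (rule cylinder_approximable_limit)
  show U: "(\<Union>i. A i) \<in> sets torus_measure" using A(1) by (intro sets.countable_UN) auto
  define U where "U n = (\<Union>i<n. A i)" for n
  have Us: "U n \<in> sets torus_measure" for n
    unfolding U_def using A(1) by (intro sets.finite_UN) auto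
  have approx: "cylinder_approximable (U n)" for n
  proof (induction n)
    case 0
    show ?case unfolding U_def
      by (rule cylinder_approximable_cylinder[of _ 0]) (auto simp: depends_on_first_def)
  next
    case (Suc n)
    have "U (Suc n) = A n \<union> U n" unfolding U_def by (auto simp: lessThan_Suc)
    then show ?case using cylinder_approximable_Un[OF A(1) Us A(2) Suc] by simp
  qed
  have "incseq U" unfolding incseq_def U_def by (meson UN_mono lessThan_subset_iff order_refl)
  moreover have "(\<Union>n. U n) = (\<Union>i. A i)" unfolding U_def by blast
  ultimately have lim: "(\<lambda>n. measure torus_measure (U n)) \<longlonglongrightarrow> measure torus_measure (\<Union>i. A i)"
    using torus.finite_Lim_measure_incseq[of U] Us by (metis image_subset_iff)
  have sym_diff_U: "measure torus_measure (sym_diff (\<Union>i. A i) (U n))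
      = measure torus_measure (\<Union>i. A i) - measure torus_measure (U n)" for n
  proof -
    have "sym_diff (\<Union>i. A i) (U n) = (\<Union>i. A i) - U n" "U n \<subseteq> (\<Union>i. A i)"
      unfolding U_def by blast+
    then show ?thesis using torus.finite_measure_Diff[OF U Us] by simp
  qed
  show "\<exists>B\<in>sets torus_measure. cylinder_approximable B \<and>
      measure torus_measure (sym_diff (\<Union>i. A i) B) < e" if "e > 0" for e
  proof -
    obtain n where "norm (measure torus_measure (U n) - measure torus_measure (\<Union>i. A i)) < e"
      using LIMSEQ_D[OF lim \<open>e > 0\<close>] by blast
    then have "measure torus_measure (sym_diff (\<Union>i. A i) (U n)) < e"
      unfolding sym_diff_U by simp
    then show ?thesis using Us approx by blast
  qed
qed

lemma cylinder_approximable: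
  assumes "A \<in> sets torus_measure"
  shows "cylinder_approximable A"
proof -
  let ?G = "prod_algebra UNIV (\<lambda>_::nat. circle_measure)"
  have sets_eq: "sets torus_measure = sigma_sets (space torus_measure) ?G"
    unfolding torus_measure_def by (simp add: sets_PiM space_PiM)
  have "Int_stable ?G" by (rule Int_stable_prod_algebra)
  moreover have "?G \<subseteq> Pow (space torus_measure)"
    using prod_algebra_sets_into_space unfolding torus_measure_def space_PiM .
  moreover have "A \<in> sigma_sets (space torus_measure) ?G"
    using assms sets_eq by simp
  ultimately show ?thesis
  proof (induction rule: sigma_sets_induct_disjoint)
    case (basic A)
    then obtain J E where A: "A = prod_emb UNIV (\<lambda>_. circle_measure) J (\<Pi>\<^sub>E j\<in>J. E j)" "finite J"
      "\<And>i. i \<in> J \<Longrightarrow> E i \<in> sets circle_measure" by (rule prod_algebraE) auto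
    obtain N where "J \<subseteq> {..<N}" using A(2) finite_nat_bounded by blast
    then have "depends_on_first N A"
      unfolding depends_on_first_def A(1)
      by (auto simp: prod_emb_def PiE_iff subset_eq space_torus_measure)
    moreover have "A \<in> sets torus_measure"
      using A unfolding torus_measure_def by (auto intro!: sets_PiM_I)
    ultimately show ?case by (intro cylinder_approximable_cylinder)
  next
    case empty
    show ?case by (rule cylinder_approximable_cylinder[of _ 0]) (auto simp: depends_on_first_def)
  next
    case (compl A)
    have "A \<subseteq> space torus_measure"
      using compl.hyps sets_eq sets.sets_into_space by blast
    then show ?case using compl.IH by (rule cylinder_approximable_compl)
  next
    case (union A)
    then show ?case using sets_eq by (intro cylinder_approximable_UN) auto
  qed
qed

section \<open>Resampling coordinates\<close>

definition resample :: "nat set \<Rightarrow> (nat \<Rightarrow> real) \<times> (nat \<Rightarrow> real) \<Rightarrow> nat \<Rightarrow> real" where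
  "resample S z = sub_embed S (fst z) (snd z)"

lemma resample_Pair[simp]: "resample S (x, y) = sub_embed S x y"
  by (simp add: resample_def)

lemma sub_embed_empty[simp]: "sub_embed {} x y = x"
  by (simp add: sub_embed_def)

lemma sub_embed_in_space:
  "x \<in> space torus_measure \<Longrightarrow> y \<in> space torus_measure \<Longrightarrow> sub_embed S x y \<in> space torus_measure"
  by (auto simp: space_torus_measure sub_embed_def)

lemma measurable_resample[measurable]:
  "resample S \<in> measurable (torus_measure \<Otimes>\<^sub>M torus_measure) torus_measure"
  unfolding torus_measure_def resample_def sub_embed_def
proof (rule measurable_PiM_single')
  fix i :: nat
  show "(\<lambda>z. if i \<in> S then snd z i else fst z i)
      \<in> measurable (Pi\<^sub>M UNIV (\<lambda>_. circle_measure) \<Otimes>\<^sub>M Pi\<^sub>M UNIV (\<lambda>_. circle_measure)) circle_measure"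
    by (cases "i \<in> S") auto
qed (auto simp: space_pair_measure space_PiM PiE_iff)

lemma measurable_sub_embed:
  assumes "x \<in> space torus_measure" and "S \<subseteq> A"
  shows "sub_embed S x \<in> measurable (Pi\<^sub>M A (\<lambda>_. circle_measure)) torus_measure"
  unfolding sub_embed_def torus_measure_def
proof (rule measurable_PiM_single')
  fix i :: nat
  show "(\<lambda>y. if i \<in> S then y i else x i) \<in> measurable (Pi\<^sub>M A (\<lambda>_. circle_measure)) circle_measure"
    using assms by (cases "i \<in> S") (auto simp: space_torus_measure)
qed (use assms in \<open>auto simp: space_PiM PiE_iff space_torus_measure\<close>)

lemma distr_resample:
  "distr (torus_measure \<Otimes>\<^sub>M torus_measure) torus_measure (resample S) = torus_measure"
proof (rule measure_eqI_PiM_infinite[symmetric, where I=UNIV and M="\<lambda>_. circle_measure"])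
  show "sets torus_measure = sets (Pi\<^sub>M UNIV (\<lambda>_. circle_measure))"
    by (simp add: torus_measure_def)
  show "sets (distr (torus_measure \<Otimes>\<^sub>M torus_measure) torus_measure (resample S))
      = sets (Pi\<^sub>M UNIV (\<lambda>_. circle_measure))"
    by (simp add: torus_measure_def)
  show "finite_measure torus_measure" by (rule torus.finite_measure_axioms)
  fix A J assume J: "finite (J::nat set)" "J \<subseteq> UNIV"
    and A: "\<And>i. i \<in> J \<Longrightarrow> A i \<in> sets circle_measure"
  let ?emb = "\<lambda>K. prod_emb UNIV (\<lambda>_. circle_measure) K (Pi\<^sub>E K A)"
  have emb: "?emb K \<in> sets torus_measure" if "K \<subseteq> J" for K
    using A that finite_subset[OF that J(1)] unfolding torus_measure_def by (intro sets_PiM_I) auto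
  have emeasure_emb: "emeasure torus_measure (?emb K) = (\<Prod>i\<in>K. emeasure circle_measure (A i))"
    if "K \<subseteq> J" for K
    unfolding torus_measure_def using A that finite_subset[OF that J(1)]
    by (intro circle.emeasure_PiM_emb) auto
  have "resample S -` ?emb J \<inter> space (torus_measure \<Otimes>\<^sub>M torus_measure) = ?emb (J - S) \<times> ?emb (J \<inter> S)"
    by (auto simp: prod_emb_def space_pair_measure torus_measure_def space_PiM resample_def
        sub_embed_def PiE_iff split: if_splits)
  then have "emeasure (distr (torus_measure \<Otimes>\<^sub>M torus_measure) torus_measure (resample S)) (?emb J)
      = emeasure torus_measure (?emb (J - S)) * emeasure torus_measure (?emb (J \<inter> S))"
    using emb[OF order_refl] emb[OF Diff_subset] emb[OF Int_lower1]
    by (simp add: emeasure_distr torus.emeasure_pair_measure_Times)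
  also have "\<dots> = (\<Prod>i\<in>J. emeasure circle_measure (A i))"
    using J(1) prod.subset_diff[of "J \<inter> S" J "\<lambda>i. emeasure circle_measure (A i)"]
    by (simp add: emeasure_emb Diff_Int)
  finally show "emeasure torus_measure (?emb J)
      = emeasure (distr (torus_measure \<Otimes>\<^sub>M torus_measure) torus_measure (resample S)) (?emb J)"
    using emeasure_emb[of J] by simp
qed

lemma AE_resample_not_in:
  assumes "N \<in> null_sets torus_measure"
  shows "AE z in torus_measure \<Otimes>\<^sub>M torus_measure. resample S z \<notin> N"
proof -
  have "AE x in distr (torus_measure \<Otimes>\<^sub>M torus_measure) torus_measure (resample S). x \<notin> N"
    unfolding distr_resample using assms by (rule AE_not_in)
  then show ?thesis by (rule AE_distrD[OF measurable_resample])
qed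

lemma AE_PiM_sub_embed:
  assumes x: "x \<in> space torus_measure" and P[measurable]: "Measurable.pred torus_measure P"
    and ae: "AE y in torus_measure. P (sub_embed A x y)"
  shows "AE z in Pi\<^sub>M A (\<lambda>_. circle_measure). P (sub_embed A x z)"
proof -
  have restrict[measurable]: "(\<lambda>y. restrict y A) \<in> measurable torus_measure (Pi\<^sub>M A (\<lambda>_. circle_measure))"
    unfolding torus_measure_def by measurable
  note measurable_sub_embed[OF x order_refl, measurable]
  have distr_restrict:
    "distr torus_measure (Pi\<^sub>M A (\<lambda>_. circle_measure)) (\<lambda>y. restrict y A) = Pi\<^sub>M A (\<lambda>_. circle_measure)"
    using distr_PiM_reindex[of UNIV "\<lambda>_. circle_measure" id A] prob_space_circle_measure
    unfolding torus_measure_def by (simp add: restrict_def)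
  have "{z \<in> space (Pi\<^sub>M A (\<lambda>_. circle_measure)). P (sub_embed A x z)}
      \<in> sets (Pi\<^sub>M A (\<lambda>_. circle_measure))"
    by measurable
  moreover have "sub_embed A x (restrict y A) = sub_embed A x y" for y
    by (auto simp: sub_embed_def)
  ultimately have "AE z in distr torus_measure (Pi\<^sub>M A (\<lambda>_. circle_measure)) (\<lambda>y. restrict y A).
      P (sub_embed A x z)"
    using ae by (simp add: AE_distr_iff[OF restrict])
  then show ?thesis unfolding distr_restrict .
qed

definition resampling_deviation ::
  "((nat \<Rightarrow> real) \<Rightarrow> real) \<Rightarrow> real \<Rightarrow> nat set \<Rightarrow> nat set \<Rightarrow> (nat \<Rightarrow> real) \<Rightarrow> ennreal" where
  "resampling_deviation G \<theta> S T x = emeasure torus_measure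
     {y \<in> space torus_measure. \<theta> \<le> \<bar>G (sub_embed S x y) - G (sub_embed T x y)\<bar>}"

lemma resampling_deviation_eq_section:
  assumes "x \<in> space torus_measure"
  shows "resampling_deviation G \<theta> S T x = emeasure torus_measure (Pair x -`
    {z \<in> space (torus_measure \<Otimes>\<^sub>M torus_measure). \<theta> \<le> \<bar>G (resample S z) - G (resample T z)\<bar>})"
  unfolding resampling_deviation_def using assms
  by (intro arg_cong[where f="emeasure torus_measure"]) (auto simp: space_pair_measure)

section \<open>Bounded functions nearly depend on finitely many coordinates\<close>

lemma emeasure_disagree_le_sym_diff:
  assumes \<phi>: "\<phi> \<in> measurable \<Omega> torus_measure" "distr \<Omega> torus_measure \<phi> = torus_measure"
    and \<psi>: "\<psi> \<in> measurable \<Omega> torus_measure" "distr \<Omega> torus_measure \<psi> = torus_measure"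
    and agree: "\<And>\<omega> i. \<omega> \<in> space \<Omega> \<Longrightarrow> i < N \<Longrightarrow> \<phi> \<omega> i = \<psi> \<omega> i"
    and E: "E \<in> sets torus_measure" and C: "C \<in> sets torus_measure" "depends_on_first N C"
  shows "emeasure \<Omega> {\<omega> \<in> space \<Omega>. (\<phi> \<omega> \<in> E) \<noteq> (\<psi> \<omega> \<in> E)}
    \<le> 2 * emeasure torus_measure (sym_diff E C)"
proof -
  let ?D = "sym_diff E C"
  have D: "?D \<in> sets torus_measure" using E C(1) by auto
  have "\<phi> \<omega> \<in> C \<longleftrightarrow> \<psi> \<omega> \<in> C" if "\<omega> \<in> space \<Omega>" for \<omega>
    using C(2) agree[OF that] measurable_space[OF \<phi>(1) that] measurable_space[OF \<psi>(1) that]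
    unfolding depends_on_first_def by blast
  then have "{\<omega> \<in> space \<Omega>. (\<phi> \<omega> \<in> E) \<noteq> (\<psi> \<omega> \<in> E)} \<subseteq> (\<phi> -` ?D \<inter> space \<Omega>) \<union> (\<psi> -` ?D \<inter> space \<Omega>)"
    by blast
  moreover have preimages: "\<phi> -` ?D \<inter> space \<Omega> \<in> sets \<Omega>" "\<psi> -` ?D \<inter> space \<Omega> \<in> sets \<Omega>"
    using measurable_sets[OF \<phi>(1) D] measurable_sets[OF \<psi>(1) D] .
  ultimately have "emeasure \<Omega> {\<omega> \<in> space \<Omega>. (\<phi> \<omega> \<in> E) \<noteq> (\<psi> \<omega> \<in> E)}
      \<le> emeasure \<Omega> ((\<phi> -` ?D \<inter> space \<Omega>) \<union> (\<psi> -` ?D \<inter> space \<Omega>))"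
    by (intro emeasure_mono sets.Un)
  also have "\<dots> \<le> emeasure \<Omega> (\<phi> -` ?D \<inter> space \<Omega>) + emeasure \<Omega> (\<psi> -` ?D \<inter> space \<Omega>)"
    using preimages by (rule emeasure_subadditive)
  also have "\<dots> = 2 * emeasure torus_measure ?D"
    using emeasure_distr[OF \<phi>(1) D] emeasure_distr[OF \<psi>(1) D] \<phi>(2) \<psi>(2)
    by (simp add: mult_2)
  finally show ?thesis .
qed

lemma ex_grid_point_between:
  fixes u v K d :: real
  assumes "d > 0" "\<bar>v\<bar> \<le> K" "v + 2 * d \<le> u"
  shows "\<exists>m::nat. m \<le> nat \<lceil>2 * K / d\<rceil> + 1 \<and> v < - K + real m * d \<and> - K + real m * d \<le> u"
proof -
  define k where "k = \<lfloor>(v + K) / d\<rfloor>"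
  have k0: "0 \<le> k" unfolding k_def using assms by simp
  have k1: "real_of_int k \<le> (v + K) / d" "(v + K) / d < real_of_int k + 1" unfolding k_def by linarith+
  have k2: "real_of_int k * d \<le> v + K" "v + K < (real_of_int k + 1) * d"
    using k1 assms(1) by (simp_all add: field_simps)
  define m where "m = nat k + 1"
  have rm: "real m = real_of_int k + 1" unfolding m_def using k0 by simp
  have "v < - K + real m * d" using k2 rm by (simp add: algebra_simps)
  moreover have "- K + real m * d \<le> u" using k2 rm assms by (simp add: algebra_simps)
  moreover have "m \<le> nat \<lceil>2 * K / d\<rceil> + 1"
  proof -
    have "(v + K) / d \<le> 2 * K / d" using assms by (simp add: divide_right_mono)
    then have "k \<le> \<lceil>2 * K / d\<rceil>" using k1 by (meson ceiling_correct floor_le_ceiling k_def le_floor_iff order.trans)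
    then show ?thesis unfolding m_def using k0 by linarith
  qed
  ultimately show ?thesis by blast
qed

lemma ex_separating_level_sets:
  fixes G :: "(nat \<Rightarrow> real) \<Rightarrow> real"
  assumes [measurable]: "G \<in> borel_measurable torus_measure" and bounded: "\<And>x. \<bar>G x\<bar> \<le> K"
    and \<theta>: "0 < \<theta>"
  shows "\<exists>(M::nat) E. (\<forall>m. E m \<in> sets torus_measure) \<and>
    (\<forall>y\<in>space torus_measure. \<forall>y'\<in>space torus_measure.
      \<theta> \<le> \<bar>G y - G y'\<bar> \<longrightarrow> (\<exists>m\<le>M. (y \<in> E m) \<noteq> (y' \<in> E m)))"
proof -
  \<comment> \<open>superlevel sets of G on a grid of mesh \<theta>/2 covering [-K, K]\<close>
  define d where "d = \<theta> / 2"
  have d: "0 < d" using \<theta> by (simp add: d_def)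
  define E where "E m = {x \<in> space torus_measure. - K + real m * d \<le> G x}" for m :: nat
  have separating: "\<exists>m\<le>nat \<lceil>2 * K / d\<rceil> + 1. (y \<in> E m) \<noteq> (y' \<in> E m)"
    if y: "y \<in> space torus_measure" "y' \<in> space torus_measure" and gap: "\<theta> \<le> \<bar>G y - G y'\<bar>"
    for y y'
  proof (cases "G y \<le> G y'")
    case True
    then have "G y + 2 * d \<le> G y'" using gap unfolding d_def by linarith
    then obtain m where "m \<le> nat \<lceil>2 * K / d\<rceil> + 1" "G y < - K + real m * d" "- K + real m * d \<le> G y'"
      using ex_grid_point_between[OF d bounded] by blast
    then show ?thesis using y unfolding E_def by auto
  next
    case False
    then have "G y' + 2 * d \<le> G y" using gap unfolding d_def by linarith
    then obtain m where "m \<le> nat \<lceil>2 * K / d\<rceil> + 1" "G y' < - K + real m * d" "- K + real m * d \<le> G y"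
      using ex_grid_point_between[OF d bounded] by blast
    then show ?thesis using y unfolding E_def by auto
  qed
  have "E m \<in> sets torus_measure" for m unfolding E_def by measurable
  with separating show ?thesis
    by (intro exI[of _ "nat \<lceil>2 * K / d\<rceil> + 1"] exI[of _ E]) blast
qed

lemma ex_initial_coords_control_deviation:
  fixes G :: "(nat \<Rightarrow> real) \<Rightarrow> real"
  assumes G: "G \<in> borel_measurable torus_measure" and bounded: "\<And>x. \<bar>G x\<bar> \<le> K"
    and \<theta>: "\<theta> > 0" and \<kappa>: "\<kappa> > 0"
  shows "\<exists>N. \<forall>(\<Omega>::'a measure) \<phi> \<psi>. \<phi> \<in> measurable \<Omega> torus_measure \<longrightarrow> \<psi> \<in> measurable \<Omega> torus_measure \<longrightarrow>
     distr \<Omega> torus_measure \<phi> = torus_measure \<longrightarrow> distr \<Omega> torus_measure \<psi> = torus_measure \<longrightarrow>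
     (\<forall>\<omega>\<in>space \<Omega>. \<forall>i<N. \<phi> \<omega> i = \<psi> \<omega> i) \<longrightarrow>
     emeasure \<Omega> {\<omega>\<in>space \<Omega>. \<theta> \<le> \<bar>G (\<phi> \<omega>) - G (\<psi> \<omega>)\<bar>} \<le> ennreal \<kappa>"
proof -
  obtain M :: nat and E where E: "\<forall>m. E m \<in> sets torus_measure"
    and separating: "\<forall>y\<in>space torus_measure. \<forall>y'\<in>space torus_measure.
      \<theta> \<le> \<bar>G y - G y'\<bar> \<longrightarrow> (\<exists>m\<le>M. (y \<in> E m) \<noteq> (y' \<in> E m))"
    using ex_separating_level_sets[OF G bounded \<theta>] by (elim exE conjE)
  note E = E[rule_format, measurable]
  define e where "e = \<kappa> / (2 * (real M + 1))"
  have e: "e > 0" using \<kappa> by (simp add: e_def)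
  have "\<forall>m. \<exists>C N. C \<in> sets torus_measure \<and> depends_on_first N C \<and>
      measure torus_measure (sym_diff (E m) C) < e"
    using cylinder_approximable[OF E] e unfolding cylinder_approximable_def by blast
  then obtain C where "\<forall>m. \<exists>N. C m \<in> sets torus_measure \<and> depends_on_first N (C m) \<and>
      measure torus_measure (sym_diff (E m) (C m)) < e"
    by (rule choice[THEN exE])
  then obtain Nm where "\<forall>m. C m \<in> sets torus_measure \<and> depends_on_first (Nm m) (C m) \<and>
      measure torus_measure (sym_diff (E m) (C m)) < e"
    by (rule choice[THEN exE])
  then have C: "\<And>m. C m \<in> sets torus_measure" "\<And>m. depends_on_first (Nm m) (C m)"
      "\<And>m. measure torus_measure (sym_diff (E m) (C m)) < e"
    by auto
  define N where "N = (\<Sum>m\<le>M. Nm m)"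
  have depends: "depends_on_first N (C m)" if "m \<le> M" for m
    using C(2) that unfolding N_def by (blast intro: depends_on_first_mono member_le_sum)
  show ?thesis
  proof (intro exI[of _ N] allI impI)
    fix \<Omega> :: "'a measure" and \<phi> \<psi>
    assume \<phi>: "\<phi> \<in> measurable \<Omega> torus_measure" and \<psi>: "\<psi> \<in> measurable \<Omega> torus_measure"
      and distr: "distr \<Omega> torus_measure \<phi> = torus_measure" "distr \<Omega> torus_measure \<psi> = torus_measure"
      and agree: "\<forall>\<omega>\<in>space \<Omega>. \<forall>i<N. \<phi> \<omega> i = \<psi> \<omega> i"
    define B where "B m = {\<omega> \<in> space \<Omega>. (\<phi> \<omega> \<in> E m) \<noteq> (\<psi> \<omega> \<in> E m)}" for m
    note [measurable] = \<phi> \<psi>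
    have B: "B m \<in> sets \<Omega>" for m
      unfolding B_def by measurable
    have "{\<omega>\<in>space \<Omega>. \<theta> \<le> \<bar>G (\<phi> \<omega>) - G (\<psi> \<omega>)\<bar>} \<subseteq> (\<Union>m\<le>M. B m)"
    proof safe
      fix \<omega> assume \<omega>: "\<omega> \<in> space \<Omega>" and "\<theta> \<le> \<bar>G (\<phi> \<omega>) - G (\<psi> \<omega>)\<bar>"
      then obtain m where "m \<le> M" "(\<phi> \<omega> \<in> E m) \<noteq> (\<psi> \<omega> \<in> E m)"
        using separating measurable_space[OF \<phi> \<omega>] measurable_space[OF \<psi> \<omega>] by blast
      then show "\<omega> \<in> (\<Union>m\<le>M. B m)" using \<omega> unfolding B_def by blast
    qed
    then have "emeasure \<Omega> {\<omega>\<in>space \<Omega>. \<theta> \<le> \<bar>G (\<phi> \<omega>) - G (\<psi> \<omega>)\<bar>} \<le> emeasure \<Omega> (\<Union>m\<le>M. B m)"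
      using B by (intro emeasure_mono) auto
    also have "\<dots> \<le> (\<Sum>m\<le>M. emeasure \<Omega> (B m))"
      using B by (intro emeasure_subadditive_finite) auto
    also have "\<dots> \<le> (\<Sum>m\<le>M. ennreal (2 * e))"
    proof (rule sum_mono)
      fix m assume "m \<in> {..M}"
      then have "emeasure \<Omega> (B m) \<le> 2 * emeasure torus_measure (sym_diff (E m) (C m))"
        unfolding B_def using agree depends
        by (intro emeasure_disagree_le_sym_diff[where N=N, OF \<phi> distr(1) \<psi> distr(2) _ E C(1)]) auto
      also have "\<dots> = ennreal (2 * measure torus_measure (sym_diff (E m) (C m)))"
        by (simp add: torus.emeasure_eq_measure ennreal_mult)
      also have "\<dots> \<le> ennreal (2 * e)"
        using C(3)[of m] by (intro ennreal_leI) simp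
      finally show "emeasure \<Omega> (B m) \<le> ennreal (2 * e)" .
    qed
    also have "\<dots> = ennreal (real (Suc M) * (2 * e))"
      using e by (simp add: ennreal_of_nat_eq_real_of_nat ennreal_mult)
    also have "real (Suc M) * (2 * e) = \<kappa>"
      unfolding e_def by (simp add: field_simps)
    finally show "emeasure \<Omega> {\<omega>\<in>space \<Omega>. \<theta> \<le> \<bar>G (\<phi> \<omega>) - G (\<psi> \<omega>)\<bar>} \<le> ennreal \<kappa>" .
  qed
qed

lemma ex_sparse_coordinate_sequence:
  fixes G :: "(nat \<Rightarrow> real) \<Rightarrow> real" and \<theta> \<kappa> :: "nat \<Rightarrow> real"
  assumes G: "G \<in> borel_measurable torus_measure" and bounded: "\<And>x. \<bar>G x\<bar> \<le> K"
    and \<theta>: "\<And>j. 0 < \<theta> j" and \<kappa>: "\<And>j. 0 < \<kappa> j"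
  obtains a :: "nat \<Rightarrow> nat" where "strict_mono a"
    and "\<And>j. emeasure (torus_measure \<Otimes>\<^sub>M torus_measure) {z \<in> space (torus_measure \<Otimes>\<^sub>M torus_measure).
      \<theta> j \<le> \<bar>G (resample (a ` {..<Suc j}) z) - G (resample (a ` {..<j}) z)\<bar>} \<le> ennreal (\<kappa> j)"
    and "\<And>j. emeasure (torus_measure \<Otimes>\<^sub>M torus_measure) {z \<in> space (torus_measure \<Otimes>\<^sub>M torus_measure).
      \<theta> j \<le> \<bar>G (resample (range a) z) - G (resample (a ` {..<j}) z)\<bar>} \<le> ennreal (\<kappa> j)"
proof -
  let ?T2 = "torus_measure \<Otimes>\<^sub>M torus_measure"
  have "\<forall>j. \<exists>N. \<forall>(\<Omega>::((nat \<Rightarrow> real) \<times> (nat \<Rightarrow> real)) measure) \<phi> \<psi>.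
     \<phi> \<in> measurable \<Omega> torus_measure \<longrightarrow> \<psi> \<in> measurable \<Omega> torus_measure \<longrightarrow>
     distr \<Omega> torus_measure \<phi> = torus_measure \<longrightarrow> distr \<Omega> torus_measure \<psi> = torus_measure \<longrightarrow>
     (\<forall>z\<in>space \<Omega>. \<forall>i<N. \<phi> z i = \<psi> z i) \<longrightarrow>
     emeasure \<Omega> {z\<in>space \<Omega>. \<theta> j \<le> \<bar>G (\<phi> z) - G (\<psi> z)\<bar>} \<le> ennreal (\<kappa> j)"
    by (intro allI ex_initial_coords_control_deviation[OF G bounded \<theta> \<kappa>])
  then obtain Nf where Nf: "\<And>j \<phi> \<psi>. \<phi> \<in> measurable ?T2 torus_measure \<Longrightarrow> \<psi> \<in> measurable ?T2 torus_measure \<Longrightarrow>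
     distr ?T2 torus_measure \<phi> = torus_measure \<Longrightarrow> distr ?T2 torus_measure \<psi> = torus_measure \<Longrightarrow>
     (\<forall>z\<in>space ?T2. \<forall>i<Nf j. \<phi> z i = \<psi> z i) \<Longrightarrow>
     emeasure ?T2 {z\<in>space ?T2. \<theta> j \<le> \<bar>G (\<phi> z) - G (\<psi> z)\<bar>} \<le> ennreal (\<kappa> j)"
    by (rule choice[THEN exE]) blast
  define a where "a j = j + (\<Sum>i\<le>j. Nf i)" for j
  have mono: "strict_mono a" unfolding a_def by (intro strict_monoI_Suc) simp
  have Nf_le: "Nf j \<le> a j" for j unfolding a_def by (simp add: member_le_sum trans_le_add2)
  have "i \<in> a ` {..<Suc j} \<longleftrightarrow> i \<in> a ` {..<j}" "i \<in> range a \<longleftrightarrow> i \<in> a ` {..<j}"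
    if "i < Nf j" for i j
  proof -
    have "i < a j" using that Nf_le[of j] by simp
    then show "i \<in> a ` {..<Suc j} \<longleftrightarrow> i \<in> a ` {..<j}" "i \<in> range a \<longleftrightarrow> i \<in> a ` {..<j}"
      using mono by (auto simp: less_Suc_eq strict_mono_less)
  qed
  then have "resample (a ` {..<Suc j}) z i = resample (a ` {..<j}) z i"
    "resample (range a) z i = resample (a ` {..<j}) z i" if "i < Nf j" for i j z
    using that by (auto simp: resample_def sub_embed_def)
  with mono show ?thesis
    by (intro that Nf measurable_resample) (auto simp: distr_resample)
qed

lemma AE_resample_range_close:
  fixes G :: "(nat \<Rightarrow> real) \<Rightarrow> real" and a :: "nat \<Rightarrow> nat"
  assumes [measurable]: "G \<in> borel_measurable torus_measure"
    and small: "\<And>J. emeasure (torus_measure \<Otimes>\<^sub>M torus_measure)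
      {z \<in> space (torus_measure \<Otimes>\<^sub>M torus_measure).
        \<theta> \<le> \<bar>G (resample (range a) z) - G (resample (a ` {..<J}) z)\<bar>} \<le> ennreal (\<kappa> J)"
    and \<kappa>: "\<kappa> \<longlonglongrightarrow> 0"
  shows "AE z in torus_measure \<Otimes>\<^sub>M torus_measure.
    \<exists>J. \<bar>G (resample (range a) z) - G (resample (a ` {..<J}) z)\<bar> < \<theta>"
proof -
  have "AE z in torus_measure \<Otimes>\<^sub>M torus_measure.
    \<exists>J. \<not> \<theta> \<le> \<bar>G (resample (range a) z) - G (resample (a ` {..<J}) z)\<bar>"
  proof (rule AE_ex_not_of_emeasure_small)
    fix e :: real assume "0 < e"
    then obtain J where "\<kappa> J < e"
      using order_tendstoD(2)[OF \<kappa>] by (metis eventually_sequentially order_refl)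
    then show "\<exists>J. emeasure (torus_measure \<Otimes>\<^sub>M torus_measure) {z \<in> space (torus_measure \<Otimes>\<^sub>M torus_measure).
        \<theta> \<le> \<bar>G (resample (range a) z) - G (resample (a ` {..<J}) z)\<bar>} < ennreal e"
      using small[of J] \<open>0 < e\<close> by (intro exI[of _ J]) (auto intro: le_less_trans ennreal_lessI)
  qed measurable
  then show ?thesis by (simp add: not_le)
qed

section \<open>Nearly constant restrictions to subtori\<close>

context
  fixes F G :: "(nat \<Rightarrow> real) \<Rightarrow> real" and N0 :: "(nat \<Rightarrow> real) set" and L :: real
  assumes L: "0 \<le> L"
    and lipschitz: "\<And>x y Q. x \<in> space torus_measure \<Longrightarrow> y \<in> space torus_measure \<Longrightarrow> finite Q \<Longrightarrow>
      (\<And>i. i \<notin> Q \<Longrightarrow> x i = y i) \<Longrightarrow> \<bar>F x - F y\<bar> \<le> L * (\<Sum>i\<in>Q. circ_dist (x i) (y i))"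
    and G_measurable[measurable]: "G \<in> borel_measurable torus_measure"
    and N0: "N0 \<in> null_sets torus_measure"
    and F_eq_G: "\<And>x. x \<in> space torus_measure \<Longrightarrow> x \<notin> N0 \<Longrightarrow> F x = G x"
begin

lemma lipschitz_sub_embed:
  assumes "x \<in> space torus_measure" "y \<in> space torus_measure" "y' \<in> space torus_measure"
    and "finite S" "T \<subseteq> S"
  shows "\<bar>F (sub_embed T x y) - F (sub_embed T x y')\<bar> \<le> L * (\<Sum>i\<in>S. circ_dist (y i) (y' i))"
proof -
  have "\<bar>F (sub_embed T x y) - F (sub_embed T x y')\<bar>
      \<le> L * (\<Sum>i\<in>S. circ_dist (sub_embed T x y i) (sub_embed T x y' i))"
    using assms by (intro lipschitz sub_embed_in_space) (auto simp: sub_embed_def)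
  also have "\<dots> \<le> L * (\<Sum>i\<in>S. circ_dist (y i) (y' i))"
    using L by (intro mult_left_mono sum_mono) (auto simp: sub_embed_def circ_dist_nonneg)
  finally show ?thesis .
qed

lemma lipschitz_sub_embed_jump:
  assumes x: "x \<in> space torus_measure" and y: "y \<in> space torus_measure" "y' \<in> space torus_measure"
    and S: "finite S" "T \<subseteq> S"
  shows "\<bar>F (sub_embed S x y') - F (sub_embed T x y')\<bar> - 2 * (L * (\<Sum>i\<in>S. circ_dist (y i) (y' i)))
    \<le> \<bar>F (sub_embed S x y) - F (sub_embed T x y)\<bar>"
  using lipschitz_sub_embed[OF x y S(1) order_refl] lipschitz_sub_embed[OF x y S] by linarith

lemma lipschitz_resample_step:
  assumes x: "x \<in> space torus_measure" and S: "finite S" "T \<subseteq> S" and s: "0 < s"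
    and small: "resampling_deviation G (s / 2) S T x
      < ennreal (min (s / (4 * (L + 1) * card S)) (1/2) ^ card S)"
    and ae: "AE y in torus_measure. sub_embed S x y \<notin> N0 \<and> sub_embed T x y \<notin> N0"
    and y0: "y0 \<in> space torus_measure"
  shows "\<bar>F (sub_embed S x y0) - F (sub_embed T x y0)\<bar> < s"
proof (rule ccontr)
  \<comment> \<open>Otherwise, by the Lipschitz bound, the jump stays at least s/2 on a whole box around y0,
    and the box is too large for the deviation set of G.\<close>
  assume "\<not> ?thesis"
  then have big: "s \<le> \<bar>F (sub_embed S x y0) - F (sub_embed T x y0)\<bar>" by simp
  then have "S \<noteq> {}" using S(2) s by auto
  then have card: "0 < card S" using S(1) by (simp add: card_gt_0_iff)
  define r where "r = s / (4 * (L + 1) * card S)"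
  have r: "0 < r" unfolding r_def using s L card by simp
  define B where "B = {y \<in> space torus_measure. \<forall>i\<in>S. circ_dist (y i) (y0 i) < r}"
  have close: "L * (\<Sum>i\<in>S. circ_dist (y i) (y0 i)) \<le> s / 4" if "y \<in> B" for y
  proof -
    have "(\<Sum>i\<in>S. circ_dist (y i) (y0 i)) \<le> card S * r"
      using that sum_mono[of S "\<lambda>i. circ_dist (y i) (y0 i)" "\<lambda>_. r"] unfolding B_def
      by (auto simp: less_imp_le)
    also have "\<dots> = s / (4 * (L + 1))" using card unfolding r_def by simp
    finally have "L * (\<Sum>i\<in>S. circ_dist (y i) (y0 i)) \<le> L * (s / (4 * (L + 1)))"
      using L by (rule mult_left_mono)
    also have "\<dots> \<le> s / 4" using L s by (simp add: field_simps)
    finally show ?thesis .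
  qed
  have jump: "s / 2 \<le> \<bar>F (sub_embed S x y) - F (sub_embed T x y)\<bar>" if "y \<in> B" for y
  proof -
    have "y \<in> space torus_measure" using that unfolding B_def by simp
    from lipschitz_sub_embed_jump[OF x this y0 S] close[OF that] big show ?thesis by linarith
  qed
  let ?D = "{y \<in> space torus_measure. s / 2 \<le> \<bar>G (sub_embed S x y) - G (sub_embed T x y)\<bar>}"
  note measurable_sub_embed[OF x subset_UNIV, unfolded torus_measure_def[symmetric], measurable]
  have D: "?D \<in> sets torus_measure" by measurable
  have "AE y in torus_measure. y \<in> B \<longrightarrow> y \<in> ?D"
    using ae
  proof eventually_elim
    case (elim y)
    show ?case
    proof
      assume "y \<in> B"
      then have "y \<in> space torus_measure" unfolding B_def by simp
      then show "y \<in> ?D" using jump[OF \<open>y \<in> B\<close>] elim x F_eq_G sub_embed_in_space by auto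
    qed
  qed
  then have "emeasure torus_measure B \<le> resampling_deviation G (s / 2) S T x"
    unfolding resampling_deviation_def using D by (rule emeasure_mono_AE)
  moreover have "ennreal (min r (1/2) ^ card S) \<le> emeasure torus_measure B"
    unfolding B_def using emeasure_torus_box_ge[OF S(1) y0 r] .
  ultimately show False using small unfolding r_def by simp
qed

lemma lipschitz_resample_telescope:
  assumes a: "inj a" and x: "x \<in> space torus_measure" and y: "y \<in> space torus_measure"
    and s: "\<And>j. 0 < s j"
    and small: "\<And>j. resampling_deviation G (s j / 2) (a ` {..<Suc j}) (a ` {..<j}) x
      < ennreal (min (s j / (4 * (L + 1) * Suc j)) (1/2) ^ Suc j)"
    and ae: "\<And>j. AE y in torus_measure. sub_embed (a ` {..<j}) x y \<notin> N0"
  shows "\<bar>F (sub_embed (a ` {..<J}) x y) - F x\<bar> \<le> (\<Sum>j<J. s j)"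
proof (induction J)
  case 0
  show ?case by simp
next
  case (Suc J)
  have "card (a ` {..<Suc J}) = Suc J"
    using a by (simp add: card_image inj_on_subset)
  moreover have "AE y in torus_measure. sub_embed (a ` {..<Suc J}) x y \<notin> N0 \<and> sub_embed (a ` {..<J}) x y \<notin> N0"
    using ae[of "Suc J"] ae[of J] by eventually_elim simp
  ultimately have "\<bar>F (sub_embed (a ` {..<Suc J}) x y) - F (sub_embed (a ` {..<J}) x y)\<bar> < s J"
    using small[of J] by (intro lipschitz_resample_step[OF x _ _ s _ _ y]) auto
  then show ?case using Suc.IH by simp
qed

lemma AE_resample_range_near_start:
  assumes a: "inj a" and x: "x \<in> space torus_measure" "x \<notin> N0"
    and s: "\<And>j. 0 < s j" "s sums \<sigma>"
    and small: "\<And>j. resampling_deviation G (s j / 2) (a ` {..<Suc j}) (a ` {..<j}) x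
      < ennreal (min (s j / (4 * (L + 1) * Suc j)) (1/2) ^ Suc j)"
    and ae: "AE y in torus_measure. (\<forall>J. sub_embed (a ` {..<J}) x y \<notin> N0) \<and>
      (\<exists>J. \<bar>G (sub_embed (range a) x y) - G (sub_embed (a ` {..<J}) x y)\<bar> < \<theta>)"
  shows "AE y in torus_measure. \<bar>G (sub_embed (range a) x y) - G x\<bar> < \<sigma> + \<theta>"
proof -
  have "AE y in torus_measure. sub_embed (a ` {..<J}) x y \<notin> N0" for J
    using ae by eventually_elim blast
  then have chain: "\<bar>F (sub_embed (a ` {..<J}) x y) - F x\<bar> \<le> \<sigma>"
    if "y \<in> space torus_measure" for y J
  proof -
    have "\<bar>F (sub_embed (a ` {..<J}) x y) - F x\<bar> \<le> (\<Sum>j<J. s j)"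
      by (rule lipschitz_resample_telescope[OF a x(1) that s(1) small]) fact
    also have "\<dots> \<le> \<sigma>"
      using s by (intro sum_le_suminf[of s, unfolded sums_unique[OF s(2), symmetric]])
        (auto simp: sums_summable less_imp_le)
    finally show ?thesis .
  qed
  show ?thesis
    using ae AE_space
  proof eventually_elim
    case (elim y)
    then obtain J where J: "\<bar>G (sub_embed (range a) x y) - G (sub_embed (a ` {..<J}) x y)\<bar> < \<theta>"
      and N0_J: "sub_embed (a ` {..<J}) x y \<notin> N0" and y: "y \<in> space torus_measure" by blast
    have "G (sub_embed (a ` {..<J}) x y) = F (sub_embed (a ` {..<J}) x y)" "G x = F x"
      using F_eq_G sub_embed_in_space[OF x(1) y] N0_J x by auto
    then show ?case using J chain[OF y, of J] by (simp only: abs_less_iff abs_le_iff) linarith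
  qed
qed

lemma AE_start_resample_range_near:
  assumes a: "inj a" and s: "\<And>j. 0 < s j" "s sums \<sigma>"
    and close: "AE z in torus_measure \<Otimes>\<^sub>M torus_measure.
      \<exists>J. \<bar>G (resample (range a) z) - G (resample (a ` {..<J}) z)\<bar> < \<theta>"
  shows "AE x in torus_measure.
    (\<forall>j. resampling_deviation G (s j / 2) (a ` {..<Suc j}) (a ` {..<j}) x
      < ennreal (min (s j / (4 * (L + 1) * Suc j)) (1/2) ^ Suc j)) \<longrightarrow>
    (AE y in torus_measure. sub_embed (range a) x y \<notin> N0 \<and>
      \<bar>G (sub_embed (range a) x y) - G x\<bar> < \<sigma> + \<theta>)"
proof -
  have "AE z in torus_measure \<Otimes>\<^sub>M torus_measure.
      (\<forall>J. resample (a ` {..<J}) z \<notin> N0) \<and> resample (range a) z \<notin> N0"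
    using AE_resample_not_in[OF N0] by (simp add: AE_all_countable)
  with close have "AE z in torus_measure \<Otimes>\<^sub>M torus_measure. (\<forall>J. resample (a ` {..<J}) z \<notin> N0) \<and>
      resample (range a) z \<notin> N0 \<and> (\<exists>J. \<bar>G (resample (range a) z) - G (resample (a ` {..<J}) z)\<bar> < \<theta>)"
    by eventually_elim blast
  from torus_pair.AE_pair[OF this]
  have "AE x in torus_measure. AE y in torus_measure. (\<forall>J. sub_embed (a ` {..<J}) x y \<notin> N0) \<and>
      sub_embed (range a) x y \<notin> N0 \<and>
      (\<exists>J. \<bar>G (sub_embed (range a) x y) - G (sub_embed (a ` {..<J}) x y)\<bar> < \<theta>)"
    by simp
  then show ?thesis
    using AE_not_in[OF N0] AE_space
  proof eventually_elim
    case (elim x)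
    show ?case
    proof
      assume small: "\<forall>j. resampling_deviation G (s j / 2) (a ` {..<Suc j}) (a ` {..<j}) x
        < ennreal (min (s j / (4 * (L + 1) * Suc j)) (1/2) ^ Suc j)"
      have "AE y in torus_measure. (\<forall>J. sub_embed (a ` {..<J}) x y \<notin> N0) \<and>
          (\<exists>J. \<bar>G (sub_embed (range a) x y) - G (sub_embed (a ` {..<J}) x y)\<bar> < \<theta>)"
        using elim(1) by eventually_elim blast
      then have "AE y in torus_measure. \<bar>G (sub_embed (range a) x y) - G x\<bar> < \<sigma> + \<theta>"
        using small by (intro AE_resample_range_near_start[OF a elim(3) elim(2) s]) auto
      with elim(1) show "AE y in torus_measure. sub_embed (range a) x y \<notin> N0 \<and>
          \<bar>G (sub_embed (range a) x y) - G x\<bar> < \<sigma> + \<theta>"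
        by eventually_elim blast
    qed
  qed
qed

lemma AE_PiM_sub_embed_near:
  assumes b: "b \<in> space torus_measure"
    and near: "AE y in torus_measure. sub_embed A b y \<notin> N0 \<and> \<bar>G (sub_embed A b y) - c\<bar> < \<epsilon>"
  shows "AE z in Pi\<^sub>M A (\<lambda>_. circle_measure). \<bar>F (sub_embed A b z) - c\<bar> < \<epsilon>"
proof -
  have [measurable]: "N0 \<in> sets torus_measure" using N0 by blast
  have "AE z in Pi\<^sub>M A (\<lambda>_. circle_measure). sub_embed A b z \<notin> N0 \<and> \<bar>G (sub_embed A b z) - c\<bar> < \<epsilon>"
    using b _ near by (rule AE_PiM_sub_embed) measurable
  then show ?thesis
    using AE_space
  proof eventually_elim
    case (elim z)
    then have "sub_embed A b z \<in> space torus_measure"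
      using measurable_space[OF measurable_sub_embed[OF b order_refl]] by blast
    with elim F_eq_G show ?case by simp
  qed
qed

lemma ex_parallel_subtorus_near:
  assumes bounded: "\<And>x. \<bar>G x\<bar> \<le> K" and \<epsilon>: "0 < \<epsilon>"
    and pos: "0 < emeasure torus_measure {x \<in> space torus_measure. \<bar>G x - c\<bar> < \<epsilon> / 4}"
  shows "\<exists>A b. infinite A \<and> b \<in> space torus_measure \<and>
    (AE z in Pi\<^sub>M A (\<lambda>_. circle_measure). \<bar>F (sub_embed A b z) - c\<bar> < \<epsilon>)"
proof -
  let ?T2 = "torus_measure \<Otimes>\<^sub>M torus_measure"
  define \<rho> where "\<rho> = measure torus_measure {x \<in> space torus_measure. \<bar>G x - c\<bar> < \<epsilon> / 4}"
  have \<rho>: "0 < \<rho>" using pos by (simp add: \<rho>_def torus.emeasure_eq_measure)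
  \<comment> \<open>s j bounds the j-th resampling step, \<beta> j is the box measure of lipschitz_resample_step,
    and the starting points violating some step bound have measure at most the sum of the \<delta> j\<close>
  define s where "s j = \<epsilon> / 8 * (1/2) ^ j" for j :: nat
  define \<beta> where "\<beta> j = min (s j / (4 * (L + 1) * Suc j)) (1/2) ^ Suc j" for j :: nat
  define \<delta> where "\<delta> j = \<rho> / 4 * (1/2) ^ j" for j :: nat
  have s: "0 < s j" for j using \<epsilon> by (simp add: s_def)
  have \<beta>: "0 < \<beta> j" "\<beta> j \<le> 1" for j
  proof -
    have "0 < min (s j / (4 * (L + 1) * Suc j)) (1/2)" using s[of j] L by simp
    moreover have "min (s j / (4 * (L + 1) * Suc j)) (1/2) \<le> 1" by simp
    ultimately show "0 < \<beta> j" "\<beta> j \<le> 1" unfolding \<beta>_def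
      by (simp_all add: power_le_one del: power_Suc)
  qed
  have \<delta>: "0 < \<delta> j" for j using \<rho> by (simp add: \<delta>_def)
  have geometric: "(\<lambda>j. C * (1/2) ^ j) sums (2 * C)" for C :: real
    using sums_mult[OF geometric_sums[of "1/2 :: real"], of C] by (simp add: mult.commute)
  have s_sums: "s sums (\<epsilon> / 4)" and \<delta>_sums: "\<delta> sums (\<rho> / 2)"
    unfolding s_def \<delta>_def using geometric[of "\<epsilon> / 8"] geometric[of "\<rho> / 4"] by simp_all
  obtain a where a: "strict_mono a"
    and dev_Suc: "\<And>j. emeasure ?T2 {z \<in> space ?T2. s j / 2 \<le>
      \<bar>G (resample (a ` {..<Suc j}) z) - G (resample (a ` {..<j}) z)\<bar>} \<le> ennreal (\<beta> j * \<delta> j)"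
    and dev_range: "\<And>j. emeasure ?T2 {z \<in> space ?T2. s j / 2 \<le>
      \<bar>G (resample (range a) z) - G (resample (a ` {..<j}) z)\<bar>} \<le> ennreal (\<beta> j * \<delta> j)"
  proof (rule ex_sparse_coordinate_sequence[OF G_measurable bounded, of "\<lambda>j. s j / 2" "\<lambda>j. \<beta> j * \<delta> j"])
    show "0 < s j / 2" "0 < \<beta> j * \<delta> j" for j using s \<beta>(1) \<delta> by simp_all
  qed (rule that)
  define Bad where "Bad j = {z \<in> space ?T2. s j / 2 \<le>
      \<bar>G (resample (a ` {..<Suc j}) z) - G (resample (a ` {..<j}) z)\<bar>}" for j
  define Good where "Good = space torus_measure -
      {x \<in> space torus_measure. \<exists>j. ennreal (\<beta> j) \<le> emeasure torus_measure (Pair x -` Bad j)}"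
  have Bad[measurable]: "Bad j \<in> sets ?T2" for j unfolding Bad_def by measurable
  have "measure torus_measure (space torus_measure - Good) \<le> (\<Sum>j. \<delta> j)"
    unfolding Good_def Diff_Diff_Int Int_absorb1[OF Collect_subset]
    using Bad \<beta>(1) less_imp_le[OF \<delta>] sums_summable[OF \<delta>_sums] dev_Suc[unfolded Bad_def[symmetric]]
    by (rule torus_pair.measure_some_large_section_le)
  define X where "X = {x \<in> Good. \<bar>G x - c\<bar> < \<epsilon> / 4}"
  have Good[measurable]: "Good \<in> sets torus_measure"
    unfolding Good_def using torus_pair.measurable_emeasure_Pair1[OF Bad] by measurable
  have X: "X \<in> sets torus_measure" unfolding X_def by measurable
  have "\<rho> \<le> measure torus_measure (X \<union> (space torus_measure - Good))"
    unfolding \<rho>_def using X by (intro torus.finite_measure_mono) (auto simp: X_def)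
  also have "\<dots> \<le> measure torus_measure X + measure torus_measure (space torus_measure - Good)"
    using X by (intro measure_subadditive) (auto simp: torus.emeasure_eq_measure)
  finally have X_pos: "0 < emeasure torus_measure X"
    using \<open>measure torus_measure (space torus_measure - Good) \<le> (\<Sum>j. \<delta> j)\<close>
      sums_unique[OF \<delta>_sums] \<rho> by (simp add: torus.emeasure_eq_measure)
  have "AE z in ?T2. \<exists>J. \<bar>G (resample (range a) z) - G (resample (a ` {..<J}) z)\<bar> < \<epsilon> / 4"
  proof (rule AE_resample_range_close)
    fix J
    have "s J / 2 \<le> \<epsilon> / 4"
      using \<epsilon> power_le_one[of "1/2 :: real" J] by (simp add: s_def)
    then have "emeasure ?T2 {z \<in> space ?T2. \<epsilon> / 4 \<le>
        \<bar>G (resample (range a) z) - G (resample (a ` {..<J}) z)\<bar>}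
      \<le> emeasure ?T2 {z \<in> space ?T2. s J / 2 \<le>
        \<bar>G (resample (range a) z) - G (resample (a ` {..<J}) z)\<bar>}"
      by (intro emeasure_mono) auto
    also have "\<dots> \<le> ennreal (\<beta> J * \<delta> J)" by (rule dev_range)
    also have "\<dots> \<le> ennreal (\<delta> J)"
      using \<beta>[of J] \<delta>[of J] by (intro ennreal_leI mult_left_le_one_le) auto
    finally show "emeasure ?T2 {z \<in> space ?T2. \<epsilon> / 4 \<le>
        \<bar>G (resample (range a) z) - G (resample (a ` {..<J}) z)\<bar>} \<le> ennreal (\<delta> J)" .
  next
    show "\<delta> \<longlonglongrightarrow> 0"
      using sums_summable[OF \<delta>_sums] by (rule summable_LIMSEQ_zero)
  qed measurable
  from AE_start_resample_range_near[OF strict_mono_imp_inj_on[OF a] s s_sums this]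
  have X_near: "AE x in torus_measure. x \<in> X \<longrightarrow>
    (AE y in torus_measure. sub_embed (range a) x y \<notin> N0 \<and> \<bar>G (sub_embed (range a) x y) - c\<bar> < \<epsilon>)"
  proof eventually_elim
    case (elim x)
    show ?case
    proof
      assume "x \<in> X"
      then have near_c: "\<bar>G x - c\<bar> < \<epsilon> / 4"
        and "\<forall>j. resampling_deviation G (s j / 2) (a ` {..<Suc j}) (a ` {..<j}) x < ennreal (\<beta> j)"
        unfolding X_def Good_def Bad_def by (auto simp: resampling_deviation_eq_section not_le)
      with elim have "AE y in torus_measure. sub_embed (range a) x y \<notin> N0 \<and>
          \<bar>G (sub_embed (range a) x y) - G x\<bar> < \<epsilon> / 4 + \<epsilon> / 4"
        unfolding \<beta>_def by blast
      then show "AE y in torus_measure. sub_embed (range a) x y \<notin> N0 \<and>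
          \<bar>G (sub_embed (range a) x y) - c\<bar> < \<epsilon>"
      proof eventually_elim
        case (elim y)
        then have "\<bar>G (sub_embed (range a) x y) - c\<bar> < \<epsilon>"
          using near_c by (simp only: abs_less_iff) linarith
        with elim show ?case by blast
      qed
    qed
  qed
  obtain b where b: "b \<in> X"
    and near: "AE y in torus_measure. sub_embed (range a) b y \<notin> N0 \<and> \<bar>G (sub_embed (range a) b y) - c\<bar> < \<epsilon>"
    using ex_in_positive_set_of_AE[OF X_near X X_pos] by blast
  have "b \<in> space torus_measure" using b unfolding X_def Good_def by blast
  moreover have "infinite (range a)"
    using strict_mono_imp_inj_on[OF a] by (simp add: range_inj_infinite)
  ultimately show ?thesis using AE_PiM_sub_embed_near[OF _ near] by blast
qed

end

lemma abs_clamp_diff_le: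
  fixes l h u v :: real
  shows "\<bar>max l (min h u) - max l (min h v)\<bar> \<le> \<bar>u - v\<bar>"
  by (auto simp: abs_le_iff max_def min_def)

lemma lipschitz_near_essential_value_on_subtorus:
  assumes p: "1 < p" and lip: "torus_lipschitz p f"
    and G: "G \<in> borel_measurable torus_measure" and f_eq_G: "AE x in torus_measure. f x = G x"
    and a: "\<And>e. 0 < e \<Longrightarrow> 0 < emeasure torus_measure {x \<in> space torus_measure. \<bar>G x - a\<bar> < e}"
    and \<epsilon>: "0 < \<epsilon>"
  obtains A b where "infinite A" "b \<in> space torus_measure"
    "AE z in Pi\<^sub>M A (\<lambda>_. circle_measure). \<bar>f (sub_embed A b z) - a\<bar> < \<epsilon>"
proof -
  \<comment> \<open>clamping to [a-1, a+1] makes the function bounded without changing it near a\<close>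
  define clamp where "clamp u = max (a - 1) (min (a + 1) u)" for u :: real
  obtain N0 where N0: "N0 \<in> null_sets torus_measure" "\<And>x. x \<in> space torus_measure \<Longrightarrow> x \<notin> N0 \<Longrightarrow> f x = G x"
    using f_eq_G by (auto elim!: AE_E)
  obtain L where L: "0 \<le> L" and lipschitz: "\<And>x y Q. x \<in> space torus_measure \<Longrightarrow> y \<in> space torus_measure \<Longrightarrow>
      finite Q \<Longrightarrow> (\<And>i. i \<notin> Q \<Longrightarrow> x i = y i) \<Longrightarrow> \<bar>f x - f y\<bar> \<le> L * (\<Sum>i\<in>Q. circ_dist (x i) (y i))"
    using torus_lipschitzE[OF p lip] by blast
  define e where "e = min \<epsilon> 1 / 2"
  have e: "0 < e" "e < 1" "e < \<epsilon>" using \<epsilon> unfolding e_def by auto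
  have clamp_near: "\<bar>clamp u - a\<bar> < d \<longleftrightarrow> \<bar>u - a\<bar> < d" if "d \<le> 1" for u d
    using that unfolding clamp_def by (auto simp: max_def min_def abs_less_iff)
  have clamp_lipschitz: "\<bar>clamp (f x) - clamp (f y)\<bar> \<le> L * (\<Sum>i\<in>Q. circ_dist (x i) (y i))"
    if "x \<in> space torus_measure" "y \<in> space torus_measure" "finite Q" "\<And>i. i \<notin> Q \<Longrightarrow> x i = y i" for x y Q
    using abs_clamp_diff_le lipschitz[OF that] unfolding clamp_def by (rule order_trans)
  have clamp_measurable: "(\<lambda>x. clamp (G x)) \<in> borel_measurable torus_measure"
    unfolding clamp_def using G by measurable
  have clamp_eq: "clamp (f x) = clamp (G x)" if "x \<in> space torus_measure" "x \<notin> N0" for x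
    using N0(2)[OF that] by simp
  have clamp_bounded: "\<bar>clamp (G x)\<bar> \<le> \<bar>a\<bar> + 1" for x
    unfolding clamp_def by (simp add: abs_le_iff max_def min_def split: abs_split)
  have "0 < emeasure torus_measure {x \<in> space torus_measure. \<bar>clamp (G x) - a\<bar> < e / 4}"
    using a[of "e / 4"] e clamp_near[of "e / 4"] by simp
  then obtain A b where "infinite A" "b \<in> space torus_measure"
    and "AE z in Pi\<^sub>M A (\<lambda>_. circle_measure). \<bar>clamp (f (sub_embed A b z)) - a\<bar> < e"
    using ex_parallel_subtorus_near[OF L clamp_lipschitz clamp_measurable N0(1) clamp_eq clamp_bounded e(1)]
    by blast
  then show thesis using e clamp_near[of e] by (intro that) auto
qed

lemma subtorus_Linf_norm_le:
  assumes "AE z in Pi\<^sub>M A (\<lambda>_. circle_measure). \<bar>g (sub_embed A b z)\<bar> \<le> c"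
  shows "subtorus_Linf_norm A b g \<le> ennreal c"
  unfolding subtorus_Linf_norm_def using assms by (intro Inf_lower) (auto elim!: AE_mp intro: ennreal_leI)

theorem theorem2:
  fixes p :: ereal and f :: "(nat \<Rightarrow> real) \<Rightarrow> real"
  assumes "1 < p"
    and "f \<in> borel_measurable (completion torus_measure)"
    and "torus_lipschitz p f"
  shows "\<exists>a::real. \<forall>\<epsilon>::real. \<epsilon> > 0 \<longrightarrow>
           (\<exists>A b. is_parallel_subtorus A b \<and>
                  subtorus_Linf_norm A b (\<lambda>x. f x - a) < ennreal \<epsilon>)"
proof -
  obtain G where G: "G \<in> borel_measurable torus_measure" "AE x in torus_measure. f x = G x"
    using completion_ex_borel_measurable_real[OF assms(2)] by blast
  obtain a where a: "\<And>e. 0 < e \<Longrightarrow> 0 < emeasure torus_measure {x \<in> space torus_measure. \<bar>G x - a\<bar> < e}"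
    using torus.ex_essential_value[OF G(1)] by blast
  show ?thesis
  proof (intro exI[of _ a] allI impI)
    fix \<epsilon> :: real assume "0 < \<epsilon>"
    then obtain A b where "infinite A" "b \<in> space torus_measure"
      and near: "AE z in Pi\<^sub>M A (\<lambda>_. circle_measure). \<bar>f (sub_embed A b z) - a\<bar> < \<epsilon> / 2"
      using lipschitz_near_essential_value_on_subtorus[OF assms(1,3) G a, of "\<epsilon> / 2"] by auto
    have "subtorus_Linf_norm A b (\<lambda>x. f x - a) \<le> ennreal (\<epsilon> / 2)"
      using near by (intro subtorus_Linf_norm_le) (auto elim: AE_mp)
    also have "\<dots> < ennreal \<epsilon>"
      using \<open>0 < \<epsilon>\<close> by (intro ennreal_lessI) auto
    finally show "\<exists>A b. is_parallel_subtorus A b \<and> subtorus_Linf_norm A b (\<lambda>x. f x - a) < ennreal \<epsilon>"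
      using \<open>infinite A\<close> \<open>b \<in> space torus_measure\<close>
      by (auto simp: is_parallel_subtorus_def space_torus_measure)
  qed
qed

end
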